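(* Let $n\ge 1$ and let $d_1^+,\dots,d_n^+$ and $d_1^-,\dots,d_n^-$ be sequences of non-negative integers (in-degrees and out-degrees, respectively), and put $d_j=d_j^++d_j^-$. 1) Let $G$ be the random directed graph on $[n]$ given by the directed random configuration model with in-degrees $d_1^+,\dots,d_n^+$ and out-degrees $d_1^-,\dots,d_n^-$. Then for every $\varepsilon>0$, $$\mathbb{P}\big(|m(G)-\mathbb{E}(m(G))|>\varepsilon\big)\le 2\exp\Big\{-\frac{\varepsilon^2n^2}{8\sum_{k=1}^n d_k^2}\Big\}.$$ 2) Let $G$ be the random directed graph on $[n]$ given by the random configuration model with total degrees $d_1,\dots,d_n$ and independently uniformly oriented edges. Then for every $\varepsilon>0$, $$\mathbb{P}\big(|m(G)-\mathbb{E}(m(G))|>\varepsilon\big)\le 2\exp\Big\{-\frac{\varepsilon^2n^2}{32\sum_{k=1}^n d_k^2}\Big\}.$$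
   Context: Graphs may have multiple edges and loops. A directed matching of a directed graph $G$ is a set $M$ of edges such that every vertex has in-degree at most one and out-degree at most one in the subgraph formed by $M$. The directed matching ratio of a finite directed graph $G$ is $m(G)=|M_{\max}(G)|/|V(G)|$, where $M_{\max}(G)$ is a directed matching of maximum size. Directed configuration model with prescribed in/out-degrees: vertex $k\in[n]$ receives $d_k^-$ tail-type half-edges and $d_k^+$ head-type half-edges (assuming $\sum_k d_k^-=\sum_k d_k^+$); a uniformly random bijection between the set of tail-type half-edges and the set of head-type half-edges is chosen, and each matched pair (tail half-edge at $u$, head half-edge at $v$) gives a directed edge $(u,v)$. Configuration model with prescribed total degrees: vertex $k$ receives $d_k$ half-edges; if the total number of half-edges is odd, one uniformly chosen half-edge is discarded; a uniformly random perfect matching of the half-edges is chosen, each matched pair giving an edge; then each edge is given one of its two orientations uniformly at random, independently of the others. *)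

theory Defs
  imports "HOL-Probability.Probability"
begin

text \<open>Directed multigraphs on the vertex set {0..<n} are represented by the
multiset of their directed edges (u,v); loops and multiple edges are allowed.\<close>

definition directed_matching :: "(nat \<times> nat) multiset \<Rightarrow> bool" where
  "directed_matching M \<longleftrightarrow>
     (\<forall>v. size (filter_mset (\<lambda>e. fst e = v) M) \<le> 1 \<and>
          size (filter_mset (\<lambda>e. snd e = v) M) \<le> 1)"

definition max_dmatching_size :: "(nat \<times> nat) multiset \<Rightarrow> nat" where
  "max_dmatching_size G = Max {size M | M. M \<subseteq># G \<and> directed_matching M}"

definition dmatching_ratio :: "nat \<Rightarrow> (nat \<times> nat) multiset \<Rightarrow> real" where
  "dmatching_ratio n G = real (max_dmatching_size G) / real n"

definition half_edges :: "nat \<Rightarrow> (nat \<Rightarrow> nat) \<Rightarrow> (nat \<times> nat) set" where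
  "half_edges n d = {(k, i). k < n \<and> i < d k}"

text \<open>Directed configuration model: din = in-degrees (head half-edges),
dout = out-degrees (tail half-edges); uniform bijection tails -> heads.\<close>
definition directed_config_model ::
  "nat \<Rightarrow> (nat \<Rightarrow> nat) \<Rightarrow> (nat \<Rightarrow> nat) \<Rightarrow> (nat \<times> nat) multiset pmf" where
  "directed_config_model n din dout =
     map_pmf (\<lambda>f. image_mset (\<lambda>t. (fst t, fst (f t))) (mset_set (half_edges n dout)))
       (pmf_of_set {f \<in> half_edges n dout \<rightarrow>\<^sub>E half_edges n din.
                      bij_betw f (half_edges n dout) (half_edges n din)})"

definition perfect_matchings :: "'a set \<Rightarrow> 'a set set set" where
  "perfect_matchings S =
     {P. (\<forall>e\<in>P. e \<subseteq> S \<and> card e = 2) \<and> (\<forall>x\<in>S. \<exists>!e. e \<in> P \<and> x \<in> e)}"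

text \<open>Orientations of a matching: for each edge choose the half-edge that becomes
the tail; the uniform distribution on these is independent fair orientation.\<close>
definition orientations :: "'a set set \<Rightarrow> ('a set \<Rightarrow> 'a) set" where
  "orientations P = {\<omega> \<in> P \<rightarrow>\<^sub>E \<Union>P. \<forall>e\<in>P. \<omega> e \<in> e}"

definition oriented_edge ::
  "((nat \<times> nat) set \<Rightarrow> nat \<times> nat) \<Rightarrow> (nat \<times> nat) set \<Rightarrow> nat \<times> nat" where
  "oriented_edge \<omega> e = (fst (\<omega> e), fst (the_elem (e - {\<omega> e})))"

definition oriented_config_model ::
  "nat \<Rightarrow> (nat \<Rightarrow> nat) \<Rightarrow> (nat \<times> nat) multiset pmf" where
  "oriented_config_model n d =
     (let H = half_edges n d in
      bind_pmf (if even (card H) then return_pmf H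
                else map_pmf (\<lambda>h. H - {h}) (pmf_of_set H)) (\<lambda>S.
      bind_pmf (pmf_of_set (perfect_matchings S)) (\<lambda>P.
      map_pmf (\<lambda>\<omega>. image_mset (oriented_edge \<omega>) (mset_set P))
        (pmf_of_set (orientations P)))))"

end

theory Submission
  imports Defs "HOL-Combinatorics.Transposition"
begin

text \<open>Both random graphs are generated by exposing their random choices one at a time: the head
  matched to each tail half-edge in the directed model; the half-edge to discard, the partner of
  one unmatched half-edge after another, and the orientation of each edge in the undirected one.
  Two possible values of the next choice are coupled, conditionally on the past, by a transposition
  of two half-edges (or by reversing one edge); this changes at most two edges of the graph, and
  adding or deleting an edge changes the maximum directed matching by at most one. So the Doob
  martingale of \<open>m(G)\<close> has increments of size at most \<open>2/n\<close>, and there are \<open>O(\<Sum> d\<^sub>k)\<close> of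
  them. Hoeffding's lemma for each increment bounds the moment generating function of \<open>m(G)\<close> by
  that of a Gaussian of variance \<open>O(\<Sum> d\<^sub>k / n\<^sup>2)\<close>, and as \<open>\<Sum> d\<^sub>k \<le> \<Sum> d\<^sub>k\<^sup>2\<close> the
  Chernoff bound gives the tail estimate.\<close>

section \<open>Sub-Gaussian fluctuations of finite distributions\<close>

text \<open>The parameter is normalised as in Hoeffding's lemma: a variable whose values lie in an
  interval of length \<open>c\<close> has parameter \<open>c\<^sup>2\<close>.\<close>

definition subgaussian :: "'a pmf \<Rightarrow> ('a \<Rightarrow> real) \<Rightarrow> real \<Rightarrow> bool" where
  "subgaussian p f s \<longleftrightarrow> finite (set_pmf p) \<and>
     (\<forall>l. measure_pmf.expectation p (\<lambda>x. exp (l * (f x - measure_pmf.expectation p f)))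
           \<le> exp (l\<^sup>2 * s / 8))"

lemma expectation_finite_pmf:
  fixes f :: "'a \<Rightarrow> real"
  assumes "finite (set_pmf p)"
  shows "measure_pmf.expectation p f = (\<Sum>a\<in>set_pmf p. pmf p a * f a)"
  using assms by (subst integral_measure_pmf_real[of "set_pmf p"]) (auto simp: mult.commute)

lemma hoeffding_mgf_finite_pmf:
  fixes q :: "'a pmf" and g :: "'a \<Rightarrow> real"
  assumes fin: "finite (set_pmf q)" and range: "\<And>x. x \<in> set_pmf q \<Longrightarrow> g x \<in> {a..b}"
    and l: "l > 0"
  shows "measure_pmf.expectation q (\<lambda>x. exp (l * (g x - measure_pmf.expectation q g)))
           \<le> exp (l\<^sup>2 * (b - a)\<^sup>2 / 8)"
proof -
  interpret interval_bounded_random_variable "measure_pmf q" g a b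
    by unfold_locales (use range in \<open>simp_all add: AE_measure_pmf_iff\<close>)
  have "nn_integral (measure_pmf q) (\<lambda>x. exp (l * (g x - measure_pmf.expectation q g)))
     = ennreal (measure_pmf.expectation q (\<lambda>x. exp (l * (g x - measure_pmf.expectation q g))))"
    by (intro nn_integral_eq_integral integrable_measure_pmf_finite fin) auto
  with Hoeffdings_lemma_nn_integral[OF l] show ?thesis
    by (simp add: ennreal_le_iff)
qed

lemma subgaussian_range:
  fixes q :: "'a pmf" and g :: "'a \<Rightarrow> real"
  assumes fin: "finite (set_pmf q)"
    and c: "\<And>x y. x \<in> set_pmf q \<Longrightarrow> y \<in> set_pmf q \<Longrightarrow> g x - g y \<le> c"
  shows "subgaussian q g (c\<^sup>2)"
proof -
  define a where "a = Min (g ` set_pmf q)"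
  have "a \<in> g ` set_pmf q"
    unfolding a_def using fin set_pmf_not_empty by (intro Min_in) auto
  then obtain y where y: "y \<in> set_pmf q" "a = g y" by auto
  have range: "g x \<in> {a..a + c}" if "x \<in> set_pmf q" for x
    using c[OF that y(1)] y(2) Min_le[of "g ` set_pmf q" "g x"] fin that by (auto simp: a_def)
  have "measure_pmf.expectation q (\<lambda>x. exp (l * (g x - measure_pmf.expectation q g)))
          \<le> exp (l\<^sup>2 * c\<^sup>2 / 8)" for l
  proof (cases l "0 :: real" rule: linorder_cases)
    case greater
    show ?thesis using hoeffding_mgf_finite_pmf[OF fin range greater] by simp
  next
    case less
    have "- g x \<in> {- (a + c)..- a}" if "x \<in> set_pmf q" for x
      using range[OF that] by simp
    from hoeffding_mgf_finite_pmf[OF fin this, where l = "- l"] less show ?thesis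
      by (simp add: algebra_simps)
  qed simp
  then show ?thesis using fin by (simp add: subgaussian_def power_mult_distrib)
qed

lemma subgaussian_mono: "subgaussian p f s \<Longrightarrow> s \<le> s' \<Longrightarrow> subgaussian p f s'"
proof -
  assume sg: "subgaussian p f s" and ss': "s \<le> s'"
  have "exp (l\<^sup>2 * s / 8) \<le> exp (l\<^sup>2 * s' / 8)" for l
    using ss' by (simp add: mult_left_mono)
  with sg show ?thesis unfolding subgaussian_def by (meson order.trans)
qed

lemma subgaussian_map_pmf: "subgaussian p (f \<circ> h) s \<Longrightarrow> subgaussian (map_pmf h p) f s"
  unfolding subgaussian_def by (simp add: integral_map_pmf o_def)

lemma subgaussian_uminus: "subgaussian p f s \<Longrightarrow> subgaussian p (\<lambda>x. - f x) s"
  unfolding subgaussian_def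
proof (intro conjI allI; (elim conjE)?)
  fix l assume "\<forall>l. measure_pmf.expectation p (\<lambda>x. exp (l * (f x - measure_pmf.expectation p f)))
                       \<le> exp (l\<^sup>2 * s / 8)"
  from this[rule_format, of "- l"]
  show "measure_pmf.expectation p (\<lambda>x. exp (l * (- f x - measure_pmf.expectation p (\<lambda>x. - f x))))
          \<le> exp (l\<^sup>2 * s / 8)"
    by (simp add: algebra_simps)
qed

lemma subgaussian_const:
  assumes "finite (set_pmf p)" and "\<And>x. x \<in> set_pmf p \<Longrightarrow> f x = k"
  shows "subgaussian p f 0"
proof -
  have "measure_pmf.expectation p f = k"
    using assms by (subst integral_cong_AE[where g = "\<lambda>_. k"]) (auto simp: AE_measure_pmf_iff)
  moreover have "measure_pmf.expectation p (\<lambda>x. exp (l * (f x - k))) = 1" for l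
    using assms by (subst integral_cong_AE[where g = "\<lambda>_. 1"]) (auto simp: AE_measure_pmf_iff)
  ultimately show ?thesis using assms(1) by (simp add: subgaussian_def)
qed

text \<open>One step of the Azuma--Hoeffding argument: the fluctuation of \<open>f\<close> around its conditional
  mean given the first draw, and the fluctuation of that conditional mean, contribute additively.\<close>

lemma subgaussian_bind_pmf:
  fixes q :: "'a pmf" and r :: "'a \<Rightarrow> 'b pmf" and f :: "'b \<Rightarrow> real"
  assumes fin: "finite (set_pmf q)"
    and inner: "\<And>x. x \<in> set_pmf q \<Longrightarrow> subgaussian (r x) f s1"
    and outer: "subgaussian q (\<lambda>x. measure_pmf.expectation (r x) f) s2"
  shows "subgaussian (bind_pmf q r) f (s1 + s2)"
proof -
  define g where "g x = measure_pmf.expectation (r x) f" for x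
  define \<mu> where "\<mu> = measure_pmf.expectation q g"
  have fin_r: "finite (set_pmf (r x))" if "x \<in> set_pmf q" for x
    using inner[OF that] by (simp add: subgaussian_def)
  have E: "measure_pmf.expectation (bind_pmf q r) h
             = (\<Sum>a\<in>set_pmf q. pmf q a * measure_pmf.expectation (r a) h)" for h :: "'b \<Rightarrow> real"
    by (subst pmf_expectation_bind[of "set_pmf q"]) (use fin fin_r in auto)
  have mean: "measure_pmf.expectation (bind_pmf q r) f = \<mu>"
    unfolding E \<mu>_def g_def using fin by (simp add: expectation_finite_pmf)
  have conditional: "measure_pmf.expectation (r a) (\<lambda>x. exp (l * (f x - \<mu>)))
        \<le> exp (l\<^sup>2 * s1 / 8) * exp (l * (g a - \<mu>))" if a: "a \<in> set_pmf q" for a l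
  proof -
    have "measure_pmf.expectation (r a) (\<lambda>x. exp (l * (f x - \<mu>)))
       = measure_pmf.expectation (r a) (\<lambda>x. exp (l * (f x - g a)) * exp (l * (g a - \<mu>)))"
      by (simp add: exp_add[symmetric] algebra_simps)
    also have "\<dots> = measure_pmf.expectation (r a) (\<lambda>x. exp (l * (f x - g a))) * exp (l * (g a - \<mu>))"
      by simp
    also have "\<dots> \<le> exp (l\<^sup>2 * s1 / 8) * exp (l * (g a - \<mu>))"
      using inner[OF a] unfolding subgaussian_def g_def by (intro mult_right_mono) auto
    finally show ?thesis .
  qed
  have "measure_pmf.expectation (bind_pmf q r) (\<lambda>x. exp (l * (f x - \<mu>)))
          \<le> exp (l\<^sup>2 * (s1 + s2) / 8)" for l
  proof -
    have "measure_pmf.expectation (bind_pmf q r) (\<lambda>x. exp (l * (f x - \<mu>)))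
        \<le> (\<Sum>a\<in>set_pmf q. pmf q a * (exp (l\<^sup>2 * s1 / 8) * exp (l * (g a - \<mu>))))"
      unfolding E by (intro sum_mono mult_left_mono conditional) auto
    also have "\<dots> = exp (l\<^sup>2 * s1 / 8) * measure_pmf.expectation q (\<lambda>a. exp (l * (g a - \<mu>)))"
      using fin by (simp add: expectation_finite_pmf sum_distrib_left algebra_simps)
    also have "\<dots> \<le> exp (l\<^sup>2 * s1 / 8) * exp (l\<^sup>2 * s2 / 8)"
      using outer unfolding subgaussian_def \<mu>_def g_def by auto
    finally show ?thesis by (simp add: exp_add[symmetric] add_divide_distrib distrib_left)
  qed
  then show ?thesis using fin fin_r by (simp add: subgaussian_def mean)
qed

lemma expectation_pmf_of_set_bij_diff:
  fixes f g :: "'a \<Rightarrow> real"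
  assumes bij: "bij_betw \<sigma> A B" and fin: "finite A" and ne: "A \<noteq> {}"
    and c: "\<And>a. a \<in> A \<Longrightarrow> \<bar>f a - g (\<sigma> a)\<bar> \<le> c"
  shows "\<bar>measure_pmf.expectation (pmf_of_set A) f - measure_pmf.expectation (pmf_of_set B) g\<bar> \<le> c"
proof -
  have fin_B: "finite B" and card_B: "card B = card A" and ne_B: "B \<noteq> {}"
    using bij fin ne bij_betw_finite bij_betw_same_card by (blast, force, force)
  have "\<bar>sum f A - sum g B\<bar> = \<bar>\<Sum>a\<in>A. f a - g (\<sigma> a)\<bar>"
    by (simp add: sum.reindex_bij_betw[OF bij] sum_subtractf)
  also have "\<dots> \<le> (\<Sum>a\<in>A. \<bar>f a - g (\<sigma> a)\<bar>)" by (rule sum_abs)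
  also have "\<dots> \<le> card A * c" using sum_mono[of A _ "\<lambda>_. c", OF c] by simp
  finally show ?thesis using fin ne fin_B ne_B card_B
    by (simp add: integral_pmf_of_set diff_divide_distrib[symmetric] divide_le_eq card_gt_0_iff
        mult.commute)
qed

text \<open>Exposing the value of \<open>\<phi>\<close> under the uniform distribution on \<open>A\<close>: since the fibres are
  matched by bijections moving \<open>f\<close> by at most \<open>c\<close>, they have equal size and conditional means
  within \<open>c\<close> of each other.\<close>

lemma subgaussian_pmf_of_set_fibres:
  fixes A :: "'a set" and f :: "'a \<Rightarrow> real" and \<phi> :: "'a \<Rightarrow> 'b"
  assumes fin: "finite A" and ne: "A \<noteq> {}"
    and fibre: "\<And>v. v \<in> \<phi> ` A \<Longrightarrow> subgaussian (pmf_of_set {a\<in>A. \<phi> a = v}) f s"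
    and coupling: "\<And>v v'. v \<in> \<phi> ` A \<Longrightarrow> v' \<in> \<phi> ` A \<Longrightarrow>
        \<exists>\<sigma>. bij_betw \<sigma> {a\<in>A. \<phi> a = v} {a\<in>A. \<phi> a = v'} \<and>
             (\<forall>a\<in>{a\<in>A. \<phi> a = v}. \<bar>f a - f (\<sigma> a)\<bar> \<le> c)"
  shows "subgaussian (pmf_of_set A) f (s + c\<^sup>2)"
proof -
  define V where "V = \<phi> ` A"
  define F where "F v = {a\<in>A. \<phi> a = v}" for v
  have fin_V: "finite V" and ne_V: "V \<noteq> {}" using fin ne by (simp_all add: V_def)
  have ne_F: "F v \<noteq> {}" if "v \<in> V" for v using that by (auto simp: V_def F_def)
  have fin_F: "finite (F v)" for v using fin by (simp add: F_def)
  obtain v0 where v0: "v0 \<in> V" using ne_V by auto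
  have card_F: "card (F v) = card (F v0)" if "v \<in> V" for v
    using coupling[of v v0] that v0 bij_betw_same_card unfolding V_def F_def by blast
  have A: "A = \<Union> (F ` V)" by (auto simp: V_def F_def)
  have "pmf_of_set A = pmf_of_set V \<bind> (\<lambda>v. pmf_of_set (F v))"
    unfolding A
    by (rule pmf_of_set_UN[where n = "card (F v0)"])
       (use fin fin_V ne_V ne_F card_F in \<open>auto simp: A[symmetric] disjoint_family_on_def F_def\<close>)
  also have "subgaussian \<dots> f (s + c\<^sup>2)"
  proof (rule subgaussian_bind_pmf)
    show "finite (set_pmf (pmf_of_set V))" using fin_V ne_V by simp
    show "subgaussian (pmf_of_set (F v)) f s" if "v \<in> set_pmf (pmf_of_set V)" for v
      using fibre that fin_V ne_V by (simp add: V_def F_def)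
    show "subgaussian (pmf_of_set V) (\<lambda>v. measure_pmf.expectation (pmf_of_set (F v)) f) (c\<^sup>2)"
    proof (rule subgaussian_range)
      fix v v' assume "v \<in> set_pmf (pmf_of_set V)" "v' \<in> set_pmf (pmf_of_set V)"
      then have vv': "v \<in> V" "v' \<in> V" using fin_V ne_V by auto
      then obtain \<sigma> where "bij_betw \<sigma> (F v) (F v')" "\<forall>a\<in>F v. \<bar>f a - f (\<sigma> a)\<bar> \<le> c"
        using coupling[of v v'] by (auto simp: V_def F_def)
      from expectation_pmf_of_set_bij_diff[OF this(1) fin_F ne_F[OF vv'(1)]] this(2)
      show "measure_pmf.expectation (pmf_of_set (F v)) f
              - measure_pmf.expectation (pmf_of_set (F v')) f \<le> c"
        by fastforce
    qed (use fin_V ne_V in simp)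
  qed
  finally show ?thesis .
qed

lemma prob_gt_le_expectation_exp:
  fixes p :: "'a pmf" and g :: "'a \<Rightarrow> real"
  assumes fin: "finite (set_pmf p)" and l: "l \<ge> 0"
  shows "measure_pmf.prob p {x. g x > e} \<le> measure_pmf.expectation p (\<lambda>x. exp (l * (g x - e)))"
proof -
  have "measure_pmf.prob p {x. g x > e} = measure_pmf.expectation p (indicator {x. g x > e})"
    by simp
  also have "\<dots> \<le> measure_pmf.expectation p (\<lambda>x. exp (l * (g x - e)))"
    by (intro integral_mono integrable_measure_pmf_finite[OF fin])
       (use l in \<open>auto simp: indicator_def\<close>)
  finally show ?thesis .
qed

lemma subgaussian_upper_tail:
  assumes sg: "subgaussian p f s" and s: "s > 0" and e: "e > 0"
  shows "measure_pmf.prob p {x. f x - measure_pmf.expectation p f > e} \<le> exp (- 2 * e\<^sup>2 / s)"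
proof -
  define \<mu> where "\<mu> = measure_pmf.expectation p f"
  define l where "l = 4 * e / s"
  have "measure_pmf.prob p {x. f x - \<mu> > e}
          \<le> measure_pmf.expectation p (\<lambda>x. exp (l * ((f x - \<mu>) - e)))"
    using sg s e by (intro prob_gt_le_expectation_exp) (auto simp: subgaussian_def l_def)
  also have "\<dots> = measure_pmf.expectation p (\<lambda>x. exp (l * (f x - \<mu>)) * exp (- l * e))"
    by (simp add: exp_add[symmetric] algebra_simps)
  also have "\<dots> = measure_pmf.expectation p (\<lambda>x. exp (l * (f x - \<mu>))) * exp (- l * e)"
    by simp
  also have "\<dots> \<le> exp (l\<^sup>2 * s / 8) * exp (- l * e)"
    using sg unfolding subgaussian_def \<mu>_def by (simp add: mult_right_mono)
  also have "\<dots> = exp (- 2 * e\<^sup>2 / s)"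
    using s by (simp add: exp_add[symmetric] l_def power2_eq_square field_simps)
  finally show ?thesis by (simp add: \<mu>_def)
qed

lemma subgaussian_tail:
  assumes sg: "subgaussian p f s" and s: "s > 0" and e: "e > 0"
  shows "measure_pmf.prob p {x. \<bar>f x - measure_pmf.expectation p f\<bar> > e} \<le> 2 * exp (- 2 * e\<^sup>2 / s)"
proof -
  have "measure_pmf.prob p {x. \<bar>f x - measure_pmf.expectation p f\<bar> > e}
      \<le> measure_pmf.prob p ({x. f x - measure_pmf.expectation p f > e} \<union>
                           {x. - f x - measure_pmf.expectation p (\<lambda>x. - f x) > e})"
    by (intro measure_pmf.finite_measure_mono) auto
  also have "\<dots> \<le> measure_pmf.prob p {x. f x - measure_pmf.expectation p f > e} +
                 measure_pmf.prob p {x. - f x - measure_pmf.expectation p (\<lambda>x. - f x) > e}"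
    by (rule measure_Un_le) auto
  also have "\<dots> \<le> exp (- 2 * e\<^sup>2 / s) + exp (- 2 * e\<^sup>2 / s)"
    by (intro add_mono subgaussian_upper_tail[OF sg s e]
        subgaussian_upper_tail[OF subgaussian_uminus[OF sg] s e])
  finally show ?thesis by simp
qed

lemma subgaussian_tail_scaled:
  fixes K S c :: real and n :: nat
  assumes sg: "subgaussian p f (K / (real n)\<^sup>2)" and K: "K \<le> 2 * c * S"
    and c: "c > 0" and S: "S \<ge> 0" and n: "n > 0" and e: "e > 0"
  shows "measure_pmf.prob p {x. \<bar>f x - measure_pmf.expectation p f\<bar> > e}
           \<le> 2 * exp (- (e\<^sup>2 * real n ^ 2) / (c * S))"
proof (cases "S = 0")
  case True
  have "measure_pmf.prob p {x. \<bar>f x - measure_pmf.expectation p f\<bar> > e} \<le> 1"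
    by (rule measure_pmf.prob_le_1)
  moreover have "2 * exp (- (e\<^sup>2 * real n ^ 2) / (c * S)) = 2" using True by simp
  ultimately show ?thesis by linarith
next
  case False
  then have pos: "2 * c * S / (real n)\<^sup>2 > 0" using S c n by simp
  have "subgaussian p f (2 * c * S / (real n)\<^sup>2)"
    by (rule subgaussian_mono[OF sg]) (simp add: K divide_right_mono)
  from subgaussian_tail[OF this pos e] show ?thesis
    using n c by (simp add: field_simps power2_eq_square)
qed

section \<open>Maximum directed matchings\<close>

lemma finite_dmatching_sizes: "finite {size M | M. M \<subseteq># G \<and> directed_matching M}"
proof (rule finite_subset)
  show "{size M | M. M \<subseteq># G \<and> directed_matching M} \<subseteq> {0..size G}"
    by (auto simp: size_mset_mono)
qed simp

lemma directed_matching_empty: "directed_matching {#}"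
  by (simp add: directed_matching_def)

lemma directed_matching_subset_mset:
  assumes M: "directed_matching M" and sub: "M' \<subseteq># M"
  shows "directed_matching M'"
  unfolding directed_matching_def
proof
  fix v
  have "size (filter_mset P M') \<le> size (filter_mset P M)" for P
    by (intro size_mset_mono multiset_filter_mono sub)
  from this[of "\<lambda>e. fst e = v"] this[of "\<lambda>e. snd e = v"] M
  show "size (filter_mset (\<lambda>e. fst e = v) M') \<le> 1 \<and> size (filter_mset (\<lambda>e. snd e = v) M') \<le> 1"
    unfolding directed_matching_def by (meson order.trans)
qed

lemma size_le_max_dmatching_size:
  assumes "M \<subseteq># G" and "directed_matching M"
  shows "size M \<le> max_dmatching_size G"
  unfolding max_dmatching_size_def
  by (rule Max_ge[OF finite_dmatching_sizes]) (use assms in blast)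

lemma max_dmatching_size_obtain:
  obtains M where "M \<subseteq># G" "directed_matching M" "size M = max_dmatching_size G"
proof -
  have "0 \<in> {size M | M. M \<subseteq># G \<and> directed_matching M}"
    by (intro CollectI exI[of _ "{#}"]) (simp add: directed_matching_empty)
  then have "max_dmatching_size G \<in> {size M | M. M \<subseteq># G \<and> directed_matching M}"
    unfolding max_dmatching_size_def by (intro Max_in finite_dmatching_sizes) blast
  then obtain M where "max_dmatching_size G = size M" "M \<subseteq># G" "directed_matching M"
    by blast
  with that show ?thesis by simp
qed

lemma max_dmatching_size_mono:
  assumes "C \<subseteq># G"
  shows "max_dmatching_size C \<le> max_dmatching_size G"
proof -
  obtain M where M: "M \<subseteq># C" "directed_matching M" "size M = max_dmatching_size C"
    by (rule max_dmatching_size_obtain)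
  have "M \<subseteq># G" using M(1) assms by (rule subset_mset.order_trans)
  from size_le_max_dmatching_size[OF this M(2)] M(3) show ?thesis by simp
qed

lemma max_dmatching_size_le_add_size_diff:
  assumes "C \<subseteq># G"
  shows "max_dmatching_size G \<le> max_dmatching_size C + size (G - C)"
proof -
  obtain M where M: "M \<subseteq># G" "directed_matching M" "size M = max_dmatching_size G"
    by (rule max_dmatching_size_obtain)
  have "size (M \<inter># C) \<le> max_dmatching_size C"
    using directed_matching_subset_mset[OF M(2)] by (intro size_le_max_dmatching_size) auto
  moreover have "M - C \<subseteq># G - C"
    using M(1) by (simp add: subseteq_mset_def diff_le_mono)
  moreover have "(M \<inter># C) + (M - (M \<inter># C)) = M"
    by (rule subset_mset.add_diff_inverse) simp
  then have "size M = size (M \<inter># C) + size (M - C)"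
    by (metis diff_intersect_left_idem size_union)
  ultimately show ?thesis using M(3) size_mset_mono by fastforce
qed

lemma max_dmatching_size_common_submset:
  assumes "C \<subseteq># G" "C \<subseteq># G'" "size (G - C) \<le> k" "size (G' - C) \<le> k"
  shows "\<bar>real (max_dmatching_size G) - real (max_dmatching_size G')\<bar> \<le> real k"
proof -
  have "max_dmatching_size C \<le> max_dmatching_size H \<and>
        max_dmatching_size H \<le> max_dmatching_size C + k" if "C \<subseteq># H" "size (H - C) \<le> k" for H
    using max_dmatching_size_mono[OF that(1)] max_dmatching_size_le_add_size_diff[OF that(1)] that(2)
    by linarith
  from this[OF assms(1,3)] this[OF assms(2,4)] show ?thesis by linarith
qed

lemma dmatching_ratio_image_mset_diff:
  assumes fin: "finite X" "finite Y" and Z: "Z \<subseteq> X" "Z \<subseteq> Y"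
    and agree: "\<And>z. z \<in> Z \<Longrightarrow> g z = h z"
    and k: "card (X - Z) \<le> k" "card (Y - Z) \<le> k"
  shows "\<bar>dmatching_ratio n (image_mset g (mset_set X))
          - dmatching_ratio n (image_mset h (mset_set Y))\<bar> \<le> real k / real n"
proof -
  have fin_Z: "finite Z" using fin(1) Z(1) finite_subset by blast
  have common: "image_mset g' (mset_set Z) \<subseteq># image_mset g' (mset_set W) \<and>
      size (image_mset g' (mset_set W) - image_mset g' (mset_set Z)) \<le> k"
    if "finite W" "Z \<subseteq> W" "card (W - Z) \<le> k" for W g'
  proof -
    have sub: "mset_set Z \<subseteq># mset_set W" using that fin_Z by (simp add: msubset_mset_set_iff)
    then have "image_mset g' (mset_set Z) \<subseteq># image_mset g' (mset_set W)"
      by (rule image_mset_subseteq_mono)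
    moreover have "card W - card Z = card (W - Z)"
      using that fin_Z by (simp add: card_Diff_subset)
    ultimately show ?thesis using sub that by (simp add: size_Diff_submset)
  qed
  have "image_mset g (mset_set Z) = image_mset h (mset_set Z)"
    using agree fin_Z by (intro image_mset_cong) simp
  then have "\<bar>real (max_dmatching_size (image_mset g (mset_set X)))
            - real (max_dmatching_size (image_mset h (mset_set Y)))\<bar> \<le> real k"
    using common[OF fin(1) Z(1) k(1), of g] common[OF fin(2) Z(2) k(2), of h]
    by (intro max_dmatching_size_common_submset[of "image_mset g (mset_set Z)"]) auto
  then show ?thesis
    unfolding dmatching_ratio_def
    by (simp add: diff_divide_distrib[symmetric] divide_right_mono)
qed

section \<open>The directed configuration model\<close>

definition pairing_graph ::
  "(nat \<times> nat) set \<Rightarrow> (nat \<times> nat \<Rightarrow> nat \<times> nat) \<Rightarrow> (nat \<times> nat) multiset" where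
  "pairing_graph T b = image_mset (\<lambda>t. (fst t, fst (b t))) (mset_set T)"

definition bijections_agreeing :: "'a set \<Rightarrow> 'b set \<Rightarrow> 'a set \<Rightarrow> ('a \<Rightarrow> 'b) \<Rightarrow> ('a \<Rightarrow> 'b) set" where
  "bijections_agreeing T H D g = {b \<in> T \<rightarrow>\<^sub>E H. bij_betw b T H \<and> (\<forall>t\<in>D. b t = g t)}"

definition transpose_values :: "'a set \<Rightarrow> 'b \<Rightarrow> 'b \<Rightarrow> ('a \<Rightarrow> 'b) \<Rightarrow> 'a \<Rightarrow> 'b" where
  "transpose_values T v v' b = restrict (Transposition.transpose v v' \<circ> b) T"

lemma finite_bijections_agreeing:
  "finite T \<Longrightarrow> finite H \<Longrightarrow> finite (bijections_agreeing T H D g)"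
  unfolding bijections_agreeing_def
  by (rule finite_subset[OF _ finite_PiE[of T "\<lambda>_. H"]]) auto

lemma bijections_agreeing_eq:
  assumes "T \<subseteq> D" "b \<in> bijections_agreeing T H D g" "b' \<in> bijections_agreeing T H D g"
  shows "b = b'"
proof
  fix x
  show "b x = b' x"
    using assms PiE_arb[of b T "\<lambda>_. H" x] PiE_arb[of b' T "\<lambda>_. H" x]
    by (cases "x \<in> T") (auto simp: bijections_agreeing_def)
qed

lemma bijections_agreeing_fibre:
  assumes "t \<notin> D"
  shows "{b \<in> bijections_agreeing T H D g. b t = v} = bijections_agreeing T H (insert t D) (g(t := v))"
  using assms by (auto simp: bijections_agreeing_def)

lemma transpose_values_mem:
  assumes b: "b \<in> bijections_agreeing T H D g" "b t = v"
    and b': "b' \<in> bijections_agreeing T H D g" "b' t = v'"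
    and t: "t \<in> T" "t \<notin> D" and D: "D \<subseteq> T"
  shows "transpose_values T v v' b \<in> bijections_agreeing T H D g"
    and "transpose_values T v v' b t = v'"
proof -
  have vv': "v \<in> H" "v' \<in> H" using b b' t(1) by (auto simp: bijections_agreeing_def)
  have "bij_betw (Transposition.transpose v v' \<circ> b) T H"
    using b(1) vv' by (intro bij_betw_trans[of b T H]) (auto simp: bijections_agreeing_def)
  then have bij: "bij_betw (transpose_values T v v' b) T H"
    unfolding transpose_values_def by (rule bij_betw_cong[THEN iffD1, rotated]) simp
  have "g s \<noteq> v" "g s \<noteq> v'" if "s \<in> D" for s
    using that b b' t D inj_onD[of b T s t] inj_onD[of b' T s t]
    by (auto simp: bijections_agreeing_def bij_betw_def)
  then have "transpose_values T v v' b s = g s" if "s \<in> D" for s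
    using that b(1) D by (auto simp: transpose_values_def bijections_agreeing_def)
  with bij show "transpose_values T v v' b \<in> bijections_agreeing T H D g"
    by (auto simp: bijections_agreeing_def bij_betw_def transpose_values_def)
  show "transpose_values T v v' b t = v'"
    using b(2) t(1) by (simp add: transpose_values_def)
qed

lemma transpose_values_transpose_values:
  assumes "b \<in> T \<rightarrow>\<^sub>E H"
  shows "transpose_values T v' v (transpose_values T v v' b) = b"
proof
  fix x
  show "transpose_values T v' v (transpose_values T v v' b) x = b x"
    using assms PiE_arb[of b T "\<lambda>_. H" x] transpose_commute[of v' v]
    by (cases "x \<in> T") (simp_all add: transpose_values_def)
qed

lemma bij_betw_transpose_values:
  assumes b: "b \<in> bijections_agreeing T H D g" "b t = v"
    and b': "b' \<in> bijections_agreeing T H D g" "b' t = v'"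
    and t: "t \<in> T" "t \<notin> D" and D: "D \<subseteq> T"
  shows "bij_betw (transpose_values T v v')
           {b \<in> bijections_agreeing T H D g. b t = v} {b \<in> bijections_agreeing T H D g. b t = v'}"
proof (rule bij_betw_byWitness[where f' = "transpose_values T v' v"])
  show "transpose_values T v v' ` {b \<in> bijections_agreeing T H D g. b t = v}
          \<subseteq> {b \<in> bijections_agreeing T H D g. b t = v'}"
    using transpose_values_mem[OF _ _ b' t D] by blast
  show "transpose_values T v' v ` {b \<in> bijections_agreeing T H D g. b t = v'}
          \<subseteq> {b \<in> bijections_agreeing T H D g. b t = v}"
    using transpose_values_mem[OF _ _ b t D] by blast
qed (auto simp: bijections_agreeing_def transpose_values_transpose_values)

text \<open>Transposing two heads rewires at most two edges.\<close>

lemma dmatching_ratio_transpose_values: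
  assumes b: "b \<in> bijections_agreeing T H D g" and T: "finite T"
  shows "\<bar>dmatching_ratio n (pairing_graph T b)
          - dmatching_ratio n (pairing_graph T (transpose_values T v v' b))\<bar> \<le> 2 / real n"
proof -
  define Z where "Z = {x \<in> T. b x \<notin> {v, v'}}"
  have "inj_on b T" using b by (auto simp: bijections_agreeing_def bij_betw_def)
  then have "card (T - Z) \<le> card {v, v'}"
    by (intro card_inj_on_le) (auto simp: Z_def inj_on_subset)
  also have "\<dots> \<le> 2" by (simp add: card_insert_if)
  finally have "card (T - Z) \<le> 2" .
  from dmatching_ratio_image_mset_diff[OF T T _ _ _ this this, of "\<lambda>t. (fst t, fst (b t))"
        "\<lambda>t. (fst t, fst (transpose_values T v v' b t))"]
  show ?thesis by (auto simp: pairing_graph_def Z_def transpose_values_def)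
qed

lemma subgaussian_pairing_graph:
  assumes T: "finite T" and H: "finite H" and D: "D \<subseteq> T"
    and ne: "bijections_agreeing T H D g \<noteq> {}"
  shows "subgaussian (pmf_of_set (bijections_agreeing T H D g))
           (\<lambda>b. dmatching_ratio n (pairing_graph T b)) (real (card (T - D)) * (2 / real n)\<^sup>2)"
  using D ne
proof (induction "card (T - D)" arbitrary: D g)
  case 0
  then have TD: "T \<subseteq> D" using T by auto
  obtain b0 where b0: "b0 \<in> bijections_agreeing T H D g" using 0 by auto
  have "subgaussian (pmf_of_set (bijections_agreeing T H D g))
          (\<lambda>b. dmatching_ratio n (pairing_graph T b)) 0"
    by (rule subgaussian_const[where k = "dmatching_ratio n (pairing_graph T b0)"])
       (use 0 finite_bijections_agreeing[OF T H] bijections_agreeing_eq[OF TD _ b0] in auto)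
  then show ?case using 0(1)[symmetric] by simp
next
  case (Suc m)
  have "T - D \<noteq> {}" using Suc(2) by (metis card.empty nat.simps(3))
  then obtain t where t: "t \<in> T" "t \<notin> D" by auto
  let ?A = "bijections_agreeing T H D g"
  have "T - insert t D = (T - D) - {t}" by auto
  then have m: "m = card (T - insert t D)" using Suc(2) t T by simp
  have "subgaussian (pmf_of_set ?A) (\<lambda>b. dmatching_ratio n (pairing_graph T b))
          (real m * (2 / real n)\<^sup>2 + (2 / real n)\<^sup>2)"
  proof (rule subgaussian_pmf_of_set_fibres[where \<phi> = "\<lambda>b. b t"])
    show "finite ?A" by (rule finite_bijections_agreeing[OF T H])
    fix v assume "v \<in> (\<lambda>b. b t) ` ?A"
    then have "{b \<in> ?A. b t = v} \<noteq> {}" by blast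
    then have "bijections_agreeing T H (insert t D) (g(t := v)) \<noteq> {}"
      unfolding bijections_agreeing_fibre[OF t(2)] .
    from Suc.hyps(1)[OF m _ this] Suc.prems(1) t(1)
    show "subgaussian (pmf_of_set {b \<in> ?A. b t = v}) (\<lambda>b. dmatching_ratio n (pairing_graph T b))
            (real m * (2 / real n)\<^sup>2)"
      by (simp add: bijections_agreeing_fibre[OF t(2)] m)
  next
    fix v v' assume "v \<in> (\<lambda>b. b t) ` ?A" "v' \<in> (\<lambda>b. b t) ` ?A"
    then obtain b b' where "b \<in> ?A" "b t = v" "b' \<in> ?A" "b' t = v'" by blast
    from bij_betw_transpose_values[OF this t Suc.prems(1)]
    show "\<exists>\<sigma>. bij_betw \<sigma> {b \<in> ?A. b t = v} {b \<in> ?A. b t = v'} \<and>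
            (\<forall>b\<in>{b \<in> ?A. b t = v}. \<bar>dmatching_ratio n (pairing_graph T b)
                                      - dmatching_ratio n (pairing_graph T (\<sigma> b))\<bar> \<le> 2 / real n)"
      by (intro exI[of _ "transpose_values T v v'"] conjI ballI dmatching_ratio_transpose_values[OF _ T])
         auto
  qed (use Suc.prems in simp)
  then show ?case using Suc(2)[symmetric] by (simp add: algebra_simps)
qed

lemma half_edges_eq_Sigma: "half_edges n d = Sigma {..<n} (\<lambda>k. {..<d k})"
  by (auto simp: half_edges_def)

lemma finite_half_edges: "finite (half_edges n d)"
  by (simp add: half_edges_eq_Sigma)

lemma card_half_edges: "card (half_edges n d) = (\<Sum>k<n. d k)"
  by (simp add: half_edges_eq_Sigma card_SigmaI)

lemma subgaussian_directed_config_model: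
  assumes "(\<Sum>k<n. dout k) = (\<Sum>k<n. din k)"
  shows "subgaussian (directed_config_model n din dout) (dmatching_ratio n)
           (4 * real (\<Sum>k<n. dout k) / (real n)\<^sup>2)"
proof -
  define T where "T = half_edges n dout"
  define H where "H = half_edges n din"
  have fin: "finite T" "finite H" by (simp_all add: T_def H_def finite_half_edges)
  have "card T = card H" using assms by (simp add: T_def H_def card_half_edges)
  then obtain h where "bij_betw h T H" using finite_same_card_bij[OF fin] by blast
  then have "restrict h T \<in> bijections_agreeing T H {} undefined"
    by (auto simp: bijections_agreeing_def bij_betw_def inj_on_def image_def)
  then have "subgaussian (pmf_of_set (bijections_agreeing T H {} undefined))
               (dmatching_ratio n \<circ> pairing_graph T) (real (card T) * (2 / real n)\<^sup>2)"
    using subgaussian_pairing_graph[OF fin, of "{}"] by (auto simp: o_def)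
  moreover have "directed_config_model n din dout
      = map_pmf (pairing_graph T) (pmf_of_set (bijections_agreeing T H {} undefined))"
    by (simp add: directed_config_model_def bijections_agreeing_def pairing_graph_def[abs_def]
        T_def H_def)
  moreover have "real (card T) * (2 / real n)\<^sup>2 = 4 * real (\<Sum>k<n. dout k) / (real n)\<^sup>2"
    by (simp add: T_def card_half_edges power_divide)
  ultimately show ?thesis by (metis subgaussian_map_pmf)
qed

section \<open>Random orientations of a fixed matching\<close>

definition oriented_graph ::
  "(nat \<times> nat) set set \<Rightarrow> ((nat \<times> nat) set \<Rightarrow> nat \<times> nat) \<Rightarrow> (nat \<times> nat) multiset" where
  "oriented_graph P \<omega> = image_mset (oriented_edge \<omega>) (mset_set P)"

definition orientations_agreeing :: "'a set set \<Rightarrow> 'a set set \<Rightarrow> ('a set \<Rightarrow> 'a) \<Rightarrow> ('a set \<Rightarrow> 'a) set" where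
  "orientations_agreeing P D w = {\<omega> \<in> orientations P. \<forall>e\<in>D. \<omega> e = w e}"

lemma finite_orientations:
  assumes "finite P" and "\<And>e. e \<in> P \<Longrightarrow> finite e"
  shows "finite (orientations P)"
proof -
  have "finite (P \<rightarrow>\<^sub>E \<Union>P)" using assms by (intro finite_PiE) auto
  then show ?thesis by (rule finite_subset[rotated]) (auto simp: orientations_def)
qed

lemma orientations_nonempty:
  assumes "\<And>e. e \<in> P \<Longrightarrow> e \<noteq> {}"
  shows "orientations P \<noteq> {}"
proof -
  have "restrict (\<lambda>e. SOME x. x \<in> e) P \<in> orientations P"
    using assms by (auto simp: orientations_def some_in_eq)
  then show ?thesis by blast
qed

lemma oriented_edge_cong: "\<omega> e = \<omega>' e \<Longrightarrow> oriented_edge \<omega> e = oriented_edge \<omega>' e"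
  by (simp add: oriented_edge_def)

lemma orientations_agreeing_eq:
  assumes "P \<subseteq> D" "\<omega> \<in> orientations_agreeing P D w" "\<omega>' \<in> orientations_agreeing P D w"
  shows "\<omega> = \<omega>'"
proof
  fix e
  have "\<omega> \<in> P \<rightarrow>\<^sub>E \<Union>P" "\<omega>' \<in> P \<rightarrow>\<^sub>E \<Union>P"
    using assms(2,3) by (auto simp: orientations_agreeing_def orientations_def)
  then show "\<omega> e = \<omega>' e"
    using assms PiE_arb[of \<omega> P "\<lambda>_. \<Union>P" e] PiE_arb[of \<omega>' P "\<lambda>_. \<Union>P" e]
    by (cases "e \<in> P") (auto simp: orientations_agreeing_def)
qed

lemma orientations_agreeing_fibre:
  assumes "e \<notin> D"
  shows "{\<omega> \<in> orientations_agreeing P D w. \<omega> e = x} = orientations_agreeing P (insert e D) (w(e := x))"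
  using assms by (auto simp: orientations_agreeing_def)

lemma fun_upd_orientations_agreeing:
  assumes \<omega>: "\<omega> \<in> orientations_agreeing P D w" and e: "e \<in> P" "e \<notin> D" and x: "x \<in> e"
  shows "\<omega> (e := x) \<in> orientations_agreeing P D w"
  using assms by (auto simp: orientations_agreeing_def orientations_def PiE_iff extensional_def)

lemma bij_betw_fun_upd_orientations:
  assumes e: "e \<in> P" "e \<notin> D" and x: "x \<in> e" "x' \<in> e"
  shows "bij_betw (\<lambda>\<omega>. \<omega> (e := x'))
           {\<omega> \<in> orientations_agreeing P D w. \<omega> e = x} {\<omega> \<in> orientations_agreeing P D w. \<omega> e = x'}"
proof (rule bij_betw_byWitness[where f' = "\<lambda>\<omega>. \<omega> (e := x)"])
  show "(\<lambda>\<omega>. \<omega> (e := x')) ` {\<omega> \<in> orientations_agreeing P D w. \<omega> e = x}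
          \<subseteq> {\<omega> \<in> orientations_agreeing P D w. \<omega> e = x'}"
    using fun_upd_orientations_agreeing[OF _ e x(2)] by auto
  show "(\<lambda>\<omega>. \<omega> (e := x)) ` {\<omega> \<in> orientations_agreeing P D w. \<omega> e = x'}
          \<subseteq> {\<omega> \<in> orientations_agreeing P D w. \<omega> e = x}"
    using fun_upd_orientations_agreeing[OF _ e x(1)] by auto
qed auto

lemma dmatching_ratio_fun_upd_orientation:
  assumes P: "finite P" and e: "e \<in> P"
  shows "\<bar>dmatching_ratio n (oriented_graph P \<omega>) - dmatching_ratio n (oriented_graph P (\<omega> (e := x)))\<bar>
           \<le> 1 / real n"
proof -
  have card: "card (P - (P - {e})) \<le> 1" using e by (simp add: Diff_Diff_Int)
  have agree: "oriented_edge \<omega> z = oriented_edge (\<omega> (e := x)) z" if "z \<in> P - {e}" for z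
    using that by (intro oriented_edge_cong) simp
  have "\<bar>dmatching_ratio n (image_mset (oriented_edge \<omega>) (mset_set P))
          - dmatching_ratio n (image_mset (oriented_edge (\<omega> (e := x))) (mset_set P))\<bar>
          \<le> real 1 / real n"
    by (rule dmatching_ratio_image_mset_diff[OF P P _ _ agree card card]) auto
  then show ?thesis by (simp add: oriented_graph_def)
qed

lemma subgaussian_oriented_graph:
  assumes P: "finite P" and fin_blocks: "\<And>e. e \<in> P \<Longrightarrow> finite e" and D: "D \<subseteq> P"
    and ne: "orientations_agreeing P D w \<noteq> {}"
  shows "subgaussian (pmf_of_set (orientations_agreeing P D w))
           (\<lambda>\<omega>. dmatching_ratio n (oriented_graph P \<omega>)) (real (card (P - D)) * (1 / real n)\<^sup>2)"
  using D ne
proof (induction "card (P - D)" arbitrary: D w)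
  case 0
  then have PD: "P \<subseteq> D" using P by auto
  obtain \<omega>0 where \<omega>0: "\<omega>0 \<in> orientations_agreeing P D w" using 0 by auto
  have "finite (orientations_agreeing P D w)"
    by (rule finite_subset[OF _ finite_orientations[OF P fin_blocks]])
       (auto simp: orientations_agreeing_def)
  then have "subgaussian (pmf_of_set (orientations_agreeing P D w))
               (\<lambda>\<omega>. dmatching_ratio n (oriented_graph P \<omega>)) 0"
    by (intro subgaussian_const[where k = "dmatching_ratio n (oriented_graph P \<omega>0)"])
       (use 0 orientations_agreeing_eq[OF PD _ \<omega>0] in auto)
  then show ?case using 0(1)[symmetric] by simp
next
  case (Suc m)
  have "P - D \<noteq> {}" using Suc(2) by (metis card.empty nat.simps(3))
  then obtain e where e: "e \<in> P" "e \<notin> D" by auto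
  let ?A = "orientations_agreeing P D w"
  have "P - insert e D = (P - D) - {e}" by auto
  then have m: "m = card (P - insert e D)" using Suc(2) e P by simp
  have "subgaussian (pmf_of_set ?A) (\<lambda>\<omega>. dmatching_ratio n (oriented_graph P \<omega>))
          (real m * (1 / real n)\<^sup>2 + (1 / real n)\<^sup>2)"
  proof (rule subgaussian_pmf_of_set_fibres[where \<phi> = "\<lambda>\<omega>. \<omega> e"])
    show "finite ?A"
      by (rule finite_subset[OF _ finite_orientations[OF P fin_blocks]])
         (auto simp: orientations_agreeing_def)
    fix x assume "x \<in> (\<lambda>\<omega>. \<omega> e) ` ?A"
    then have "{\<omega> \<in> ?A. \<omega> e = x} \<noteq> {}" by blast
    then have "orientations_agreeing P (insert e D) (w(e := x)) \<noteq> {}"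
      unfolding orientations_agreeing_fibre[OF e(2)] .
    from Suc.hyps(1)[OF m _ this] Suc.prems(1) e(1)
    show "subgaussian (pmf_of_set {\<omega> \<in> ?A. \<omega> e = x}) (\<lambda>\<omega>. dmatching_ratio n (oriented_graph P \<omega>))
            (real m * (1 / real n)\<^sup>2)"
      by (simp add: orientations_agreeing_fibre[OF e(2)] m)
  next
    fix x x' assume "x \<in> (\<lambda>\<omega>. \<omega> e) ` ?A" "x' \<in> (\<lambda>\<omega>. \<omega> e) ` ?A"
    then have "x \<in> e" "x' \<in> e"
      using e(1) by (auto simp: orientations_agreeing_def orientations_def)
    from bij_betw_fun_upd_orientations[OF e this]
    show "\<exists>\<sigma>. bij_betw \<sigma> {\<omega> \<in> ?A. \<omega> e = x} {\<omega> \<in> ?A. \<omega> e = x'} \<and>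
            (\<forall>\<omega>\<in>{\<omega> \<in> ?A. \<omega> e = x}. \<bar>dmatching_ratio n (oriented_graph P \<omega>)
                                 - dmatching_ratio n (oriented_graph P (\<sigma> \<omega>))\<bar> \<le> 1 / real n)"
      by (intro exI[of _ "\<lambda>\<omega>. \<omega> (e := x')"] conjI ballI
          dmatching_ratio_fun_upd_orientation[OF P e(1)])
  qed (use Suc.prems in simp)
  then show ?case using Suc(2)[symmetric] by (simp add: algebra_simps)
qed

section \<open>Perfect matchings\<close>

lemma perfect_matchingsD:
  assumes "P \<in> perfect_matchings S" "e \<in> P"
  shows "e \<subseteq> S" "card e = 2"
  using assms unfolding perfect_matchings_def by blast+

lemma perfect_matchings_unique:
  "P \<in> perfect_matchings S \<Longrightarrow> e \<in> P \<Longrightarrow> e' \<in> P \<Longrightarrow> z \<in> e \<Longrightarrow> z \<in> e' \<Longrightarrow> e = e'"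
  unfolding perfect_matchings_def by blast

lemma perfect_matchings_cover: "P \<in> perfect_matchings S \<Longrightarrow> z \<in> S \<Longrightarrow> \<exists>e\<in>P. z \<in> e"
  unfolding perfect_matchings_def by blast

lemma perfect_matchingsI:
  assumes "\<And>e. e \<in> P \<Longrightarrow> e \<subseteq> S \<and> card e = 2" and "\<And>z. z \<in> S \<Longrightarrow> \<exists>e\<in>P. z \<in> e"
    and "\<And>e e' z. e \<in> P \<Longrightarrow> e' \<in> P \<Longrightarrow> z \<in> e \<Longrightarrow> z \<in> e' \<Longrightarrow> e = e'"
  shows "P \<in> perfect_matchings S"
  unfolding perfect_matchings_def using assms by blast

lemma perfect_matchings_subset_Pow: "P \<in> perfect_matchings S \<Longrightarrow> P \<subseteq> Pow S"
  using perfect_matchingsD by blast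

lemma finite_perfect_matchings: "finite S \<Longrightarrow> finite (perfect_matchings S)"
  by (rule finite_subset[of _ "Pow (Pow S)"]) (auto dest: perfect_matchings_subset_Pow)

lemma finite_perfect_matching: "finite S \<Longrightarrow> P \<in> perfect_matchings S \<Longrightarrow> finite P"
  using perfect_matchings_subset_Pow[of P S] by (meson finite_Pow_iff finite_subset)

lemma finite_perfect_matching_block: "P \<in> perfect_matchings S \<Longrightarrow> e \<in> P \<Longrightarrow> finite e"
  using perfect_matchingsD(2)[of P S e] card.infinite by fastforce

lemma perfect_matching_block_nonempty: "P \<in> perfect_matchings S \<Longrightarrow> e \<in> P \<Longrightarrow> e \<noteq> {}"
  using perfect_matchingsD(2)[of P S e] by fastforce

lemma card_perfect_matching_le:
  assumes S: "finite S" and P: "P \<in> perfect_matchings S"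
  shows "card P \<le> card S"
proof (rule card_inj_on_le[where f = "\<lambda>e. SOME z. z \<in> e"])
  have some: "(SOME z. z \<in> e) \<in> e" if "e \<in> P" for e
    using perfect_matching_block_nonempty[OF P that] by (simp add: some_in_eq)
  show "inj_on (\<lambda>e. SOME z. z \<in> e) P"
  proof (rule inj_onI)
    fix e e' assume "e \<in> P" "e' \<in> P" "(SOME z. z \<in> e) = (SOME z. z \<in> e')"
    with some[of e] some[of e'] show "e = e'" by (intro perfect_matchings_unique[OF P]) auto
  qed
  show "(\<lambda>e. SOME z. z \<in> e) ` P \<subseteq> S"
    using some perfect_matchingsD(1)[OF P] by blast
qed (rule S)

lemma card_perfect_matching_blocks_meeting:
  assumes P: "P \<in> perfect_matchings S" and fin: "finite P"
  shows "card {e\<in>P. x \<in> e \<or> y \<in> e} \<le> 2"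
proof -
  have one: "card {e\<in>P. z \<in> e} \<le> 1" for z
    using fin perfect_matchings_unique[OF P] card_le_Suc0_iff_eq[of "{e\<in>P. z \<in> e}"] by auto
  have "{e\<in>P. x \<in> e \<or> y \<in> e} = {e\<in>P. x \<in> e} \<union> {e\<in>P. y \<in> e}" by auto
  then have "card {e\<in>P. x \<in> e \<or> y \<in> e} \<le> card {e\<in>P. x \<in> e} + card {e\<in>P. y \<in> e}"
    by (simp add: card_Un_le)
  with one[of x] one[of y] show ?thesis by linarith
qed

lemma perfect_matchings_nonempty:
  "finite S \<Longrightarrow> even (card S) \<Longrightarrow> perfect_matchings S \<noteq> {}"
proof (induction "card S" arbitrary: S rule: less_induct)
  case less
  show ?case
  proof (cases "S = {}")
    case True
    have "{} \<in> perfect_matchings {}" by (rule perfect_matchingsI) auto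
    with True show ?thesis by auto
  next
    case False
    then obtain x where x: "x \<in> S" by auto
    have "card S \<noteq> 1" using less.prems(2) by auto
    moreover have "card S > 0" using False less.prems(1) by (simp add: card_gt_0_iff)
    ultimately have "card (S - {x}) > 0" using x less.prems(1) by simp
    then have "S - {x} \<noteq> {}" by (simp add: card_gt_0_iff)
    then obtain y where y: "y \<in> S" "y \<noteq> x" by blast
    define S' where "S' = S - {x, y}"
    have fin: "finite S'" and card: "card S' = card S - 2"
      using x y less.prems(1) by (simp_all add: S'_def)
    moreover have "card {x, y} \<le> card S"
      using x y less.prems(1) by (intro card_mono) auto
    ultimately have "card S' < card S" "even (card S')"
      using y(2) less.prems(2) by auto
    then obtain P' where P': "P' \<in> perfect_matchings S'"
      using less.hyps[OF _ fin] by blast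
    have outside: "x \<notin> e" "y \<notin> e" if "e \<in> P'" for e
      using perfect_matchingsD(1)[OF P' that] by (auto simp: S'_def)
    have "insert {x, y} P' \<in> perfect_matchings S"
    proof (rule perfect_matchingsI)
      show "e \<subseteq> S \<and> card e = 2" if "e \<in> insert {x, y} P'" for e
        using that perfect_matchingsD[OF P'] x y by (auto simp: S'_def)
      show "\<exists>e\<in>insert {x, y} P'. z \<in> e" if "z \<in> S" for z
        using that perfect_matchings_cover[OF P', of z] by (cases "z \<in> {x, y}") (auto simp: S'_def)
      show "e = e'" if "e \<in> insert {x, y} P'" "e' \<in> insert {x, y} P'" "z \<in> e" "z \<in> e'" for e e' z
        using that outside perfect_matchings_unique[OF P', of e e' z] by blast
    qed
    then show ?thesis by blast
  qed
qed

section \<open>Transposing two half-edges\<close>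

definition transpose_blocks :: "'a \<Rightarrow> 'a \<Rightarrow> 'a set set \<Rightarrow> 'a set set" where
  "transpose_blocks x y P = (\<lambda>e. Transposition.transpose x y ` e) ` P"

definition transpose_orientation ::
  "'a \<Rightarrow> 'a \<Rightarrow> 'a set set \<Rightarrow> ('a set \<Rightarrow> 'a) \<Rightarrow> 'a set \<Rightarrow> 'a" where
  "transpose_orientation x y P' \<omega> =
     restrict (\<lambda>e'. Transposition.transpose x y (\<omega> (Transposition.transpose x y ` e'))) P'"

lemma transpose_image_transpose_image [simp]:
  "Transposition.transpose x y ` Transposition.transpose x y ` e = e"
  by (simp add: image_comp)

lemma mem_transpose_blocks: "e' \<in> transpose_blocks x y P \<longleftrightarrow> Transposition.transpose x y ` e' \<in> P"
proof
  assume "e' \<in> transpose_blocks x y P"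
  then show "Transposition.transpose x y ` e' \<in> P" by (auto simp: transpose_blocks_def)
next
  assume "Transposition.transpose x y ` e' \<in> P"
  then have "Transposition.transpose x y ` Transposition.transpose x y ` e' \<in> transpose_blocks x y P"
    unfolding transpose_blocks_def by (rule imageI)
  then show "e' \<in> transpose_blocks x y P" by simp
qed

lemma transpose_blocks_transpose_blocks [simp]: "transpose_blocks x y (transpose_blocks x y P) = P"
  by (auto simp: mem_transpose_blocks)

lemma transpose_blocks_commute: "transpose_blocks y x = transpose_blocks x y"
  unfolding transpose_blocks_def transpose_commute[of y x] ..

lemma transpose_image_fixed: "x \<notin> e \<Longrightarrow> y \<notin> e \<Longrightarrow> Transposition.transpose x y ` e = e"
  by (rule transpose_image_eq) simp

lemma transpose_blocks_perfect_matchings: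
  assumes P: "P \<in> perfect_matchings S"
  shows "transpose_blocks x y P \<in> perfect_matchings (Transposition.transpose x y ` S)"
proof (rule perfect_matchingsI)
  fix e' assume "e' \<in> transpose_blocks x y P"
  then have e: "Transposition.transpose x y ` e' \<in> P" by (simp add: mem_transpose_blocks)
  have "Transposition.transpose x y ` Transposition.transpose x y ` e'
          \<subseteq> Transposition.transpose x y ` S"
    using perfect_matchingsD(1)[OF P e] by (rule image_mono)
  moreover have "card (Transposition.transpose x y ` e') = card e'"
    by (rule card_image) simp
  ultimately show "e' \<subseteq> Transposition.transpose x y ` S \<and> card e' = 2"
    using perfect_matchingsD(2)[OF P e] by simp
next
  fix z assume "z \<in> Transposition.transpose x y ` S"
  then have "Transposition.transpose x y z \<in> S" by (simp add: in_transpose_image_iff)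
  then obtain e where "e \<in> P" "Transposition.transpose x y z \<in> e"
    using perfect_matchings_cover[OF P] by blast
  then show "\<exists>e\<in>transpose_blocks x y P. z \<in> e"
    by (intro bexI[of _ "Transposition.transpose x y ` e"])
       (auto simp: in_transpose_image_iff mem_transpose_blocks)
next
  fix e e' z assume "e \<in> transpose_blocks x y P" "e' \<in> transpose_blocks x y P" "z \<in> e" "z \<in> e'"
  then have "Transposition.transpose x y ` e = Transposition.transpose x y ` e'"
    using perfect_matchings_unique[OF P, of _ _ "Transposition.transpose x y z"]
    by (auto simp: mem_transpose_blocks)
  then show "e = e'" by (metis transpose_image_transpose_image)
qed

lemma transpose_orientation_mem:
  assumes \<omega>: "\<omega> \<in> orientations P"
  shows "transpose_orientation x y (transpose_blocks x y P) \<omega> \<in> orientations (transpose_blocks x y P)"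
proof -
  have "transpose_orientation x y (transpose_blocks x y P) \<omega> e' \<in> e'"
    if "e' \<in> transpose_blocks x y P" for e'
  proof -
    have "\<omega> (Transposition.transpose x y ` e') \<in> Transposition.transpose x y ` e'"
      using \<omega> that by (auto simp: orientations_def mem_transpose_blocks)
    then have "Transposition.transpose x y (\<omega> (Transposition.transpose x y ` e'))
                 \<in> Transposition.transpose x y ` Transposition.transpose x y ` e'"
      by (rule imageI)
    then show ?thesis using that by (simp add: transpose_orientation_def)
  qed
  then show ?thesis by (auto simp: orientations_def transpose_orientation_def)
qed

lemma transpose_orientation_transpose_orientation:
  assumes \<omega>: "\<omega> \<in> orientations P"
  shows "transpose_orientation x y P (transpose_orientation x y (transpose_blocks x y P) \<omega>) = \<omega>"
proof
  fix e
  have "\<omega> \<in> P \<rightarrow>\<^sub>E \<Union>P" using \<omega> by (simp add: orientations_def)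
  then show "transpose_orientation x y P (transpose_orientation x y (transpose_blocks x y P) \<omega>) e = \<omega> e"
    using PiE_arb[of \<omega> P "\<lambda>_. \<Union>P" e]
    by (cases "e \<in> P") (simp_all add: transpose_orientation_def mem_transpose_blocks)
qed

lemma bij_betw_transpose_orientation:
  "bij_betw (transpose_orientation x y (transpose_blocks x y P))
     (orientations P) (orientations (transpose_blocks x y P))"
proof (rule bij_betw_byWitness[where f' = "transpose_orientation x y P"])
  show "\<forall>\<omega>\<in>orientations (transpose_blocks x y P).
          transpose_orientation x y (transpose_blocks x y P) (transpose_orientation x y P \<omega>) = \<omega>"
    using transpose_orientation_transpose_orientation[of _ "transpose_blocks x y P" x y] by simp
  show "transpose_orientation x y P ` orientations (transpose_blocks x y P) \<subseteq> orientations P"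
    using transpose_orientation_mem[of _ "transpose_blocks x y P" x y] by auto
qed (auto simp: transpose_orientation_transpose_orientation transpose_orientation_mem)

text \<open>Only the at most two edges containing \<open>x\<close> or \<open>y\<close> are changed.\<close>

lemma dmatching_ratio_transpose_orientation:
  assumes S: "finite S" and P: "P \<in> perfect_matchings S" and \<omega>: "\<omega> \<in> orientations P"
  shows "\<bar>dmatching_ratio n (oriented_graph P \<omega>) - dmatching_ratio n
           (oriented_graph (transpose_blocks x y P) (transpose_orientation x y (transpose_blocks x y P) \<omega>))\<bar>
         \<le> 2 / real n"
proof -
  define Z where "Z = {e\<in>P. x \<notin> e \<and> y \<notin> e}"
  define P' where "P' = transpose_blocks x y P"
  have fin: "finite P" "finite P'"
    using finite_perfect_matching[OF S P] by (simp_all add: P'_def transpose_blocks_def)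
  have P': "P' \<in> perfect_matchings (Transposition.transpose x y ` S)"
    unfolding P'_def by (rule transpose_blocks_perfect_matchings[OF P])
  have Z: "Z \<subseteq> P" "Z \<subseteq> P'"
    by (auto simp: Z_def P'_def mem_transpose_blocks transpose_image_fixed)
  have "P - Z = {e\<in>P. x \<in> e \<or> y \<in> e}" by (auto simp: Z_def)
  then have card: "card (P - Z) \<le> 2"
    using card_perfect_matching_blocks_meeting[OF P fin(1)] by simp
  have "P' - Z \<subseteq> {e\<in>P'. x \<in> e \<or> y \<in> e}"
  proof
    fix e assume e: "e \<in> P' - Z"
    show "e \<in> {e\<in>P'. x \<in> e \<or> y \<in> e}"
    proof (rule ccontr)
      assume "e \<notin> {e\<in>P'. x \<in> e \<or> y \<in> e}"
      then have "x \<notin> e" "y \<notin> e" using e by auto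
      moreover from this have "e \<in> P"
        using e by (simp add: P'_def mem_transpose_blocks transpose_image_fixed)
      ultimately show False using e by (simp add: Z_def)
    qed
  qed
  then have "card (P' - Z) \<le> card {e\<in>P'. x \<in> e \<or> y \<in> e}"
    by (rule card_mono[rotated]) (use fin(2) in simp)
  then have card': "card (P' - Z) \<le> 2"
    using card_perfect_matching_blocks_meeting[OF P' fin(2), of x y] by linarith
  have agree: "oriented_edge \<omega> e = oriented_edge (transpose_orientation x y P' \<omega>) e" if "e \<in> Z" for e
  proof (rule oriented_edge_cong)
    have "e \<in> P" "x \<notin> e" "y \<notin> e" using that by (auto simp: Z_def)
    moreover from this have "\<omega> e \<noteq> x" "\<omega> e \<noteq> y" using \<omega> by (auto simp: orientations_def)
    ultimately show "\<omega> e = transpose_orientation x y P' \<omega> e"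
      using Z(2) that by (simp add: transpose_orientation_def transpose_image_fixed subsetD)
  qed
  have "\<bar>dmatching_ratio n (image_mset (oriented_edge \<omega>) (mset_set P)) - dmatching_ratio n
         (image_mset (oriented_edge (transpose_orientation x y P' \<omega>)) (mset_set P'))\<bar> \<le> real 2 / real n"
    by (rule dmatching_ratio_image_mset_diff[OF fin Z agree card card'])
  then show ?thesis by (simp add: oriented_graph_def P'_def)
qed

section \<open>Exposing a uniform perfect matching\<close>

definition avg_oriented_ratio :: "nat \<Rightarrow> (nat \<times> nat) set set \<Rightarrow> real" where
  "avg_oriented_ratio n P =
     measure_pmf.expectation (pmf_of_set (orientations P)) (\<lambda>\<omega>. dmatching_ratio n (oriented_graph P \<omega>))"

definition perfect_matchings_containing :: "'a set \<Rightarrow> 'a set set \<Rightarrow> 'a set set set" where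
  "perfect_matchings_containing S Q = {P \<in> perfect_matchings S. Q \<subseteq> P}"

definition block_of :: "'a set set \<Rightarrow> 'a \<Rightarrow> 'a set" where
  "block_of P a = (THE e. e \<in> P \<and> a \<in> e)"

lemma avg_oriented_ratio_transpose_blocks:
  assumes S: "finite S" and P: "P \<in> perfect_matchings S"
  shows "\<bar>avg_oriented_ratio n P - avg_oriented_ratio n (transpose_blocks x y P)\<bar> \<le> 2 / real n"
  unfolding avg_oriented_ratio_def
proof (rule expectation_pmf_of_set_bij_diff[OF bij_betw_transpose_orientation])
  show "finite (orientations P)"
    using finite_perfect_matching[OF S P] finite_perfect_matching_block[OF P]
    by (rule finite_orientations)
  show "orientations P \<noteq> {}"
    using perfect_matching_block_nonempty[OF P] by (rule orientations_nonempty)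
qed (rule dmatching_ratio_transpose_orientation[OF S P])

lemma block_of_eq:
  assumes "P \<in> perfect_matchings S" "e \<in> P" "a \<in> e"
  shows "block_of P a = e"
  unfolding block_of_def
proof (rule the_equality)
  show "e \<in> P \<and> a \<in> e" using assms(2,3) ..
  show "e' = e" if "e' \<in> P \<and> a \<in> e'" for e'
    using that perfect_matchings_unique[OF assms(1), of e' e a] assms(2,3) by blast
qed

lemma block_of_mem:
  assumes "P \<in> perfect_matchings S" "a \<in> S"
  shows "block_of P a \<in> P" "a \<in> block_of P a"
proof -
  obtain e where "e \<in> P" "a \<in> e" using perfect_matchings_cover[OF assms] by blast
  with block_of_eq[OF assms(1) this] show "block_of P a \<in> P" "a \<in> block_of P a" by simp_all
qed

lemma finite_perfect_matchings_containing: "finite S \<Longrightarrow> finite (perfect_matchings_containing S Q)"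
  by (rule finite_subset[OF _ finite_perfect_matchings]) (auto simp: perfect_matchings_containing_def)

lemma perfect_matchings_containing_fibre:
  assumes "a \<in> S" "a \<in> e"
  shows "{P \<in> perfect_matchings_containing S Q. block_of P a = e}
           = perfect_matchings_containing S (insert e Q)"
  using assms block_of_mem[of _ S a] block_of_eq[of _ S e a]
  by (auto simp: perfect_matchings_containing_def)

lemma block_of_eq_doubleton:
  assumes v: "v \<in> (\<lambda>P. block_of P a) ` perfect_matchings_containing S Q"
    and a: "a \<in> S" "a \<notin> \<Union>Q"
  obtains b where "v = {a, b}" "a \<noteq> b" "b \<in> S" "b \<notin> \<Union>Q"
proof -
  obtain P where P': "P \<in> perfect_matchings S" and Q: "Q \<subseteq> P" and v: "v = block_of P a"
    using v by (auto simp: perfect_matchings_containing_def)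
  note e = block_of_mem[OF P' a(1)]
  obtain x y where xy: "block_of P a = {x, y}" "x \<noteq> y"
    using perfect_matchingsD(2)[OF P' e(1)] by (auto simp: card_2_iff)
  define b where "b = (if x = a then y else x)"
  have ab: "block_of P a = {a, b}" "a \<noteq> b" using xy e(2) by (auto simp: b_def)
  then have "b \<in> S" using perfect_matchingsD(1)[OF P' e(1)] by auto
  moreover have "b \<notin> \<Union>Q"
  proof
    assume "b \<in> \<Union>Q"
    then obtain q where "q \<in> Q" "b \<in> q" by auto
    then have "q = block_of P a"
      using perfect_matchings_unique[OF P' _ e(1), of q b] Q ab(1) by auto
    then show False using \<open>q \<in> Q\<close> e(2) a(2) by auto
  qed
  ultimately show ?thesis using that ab v by blast
qed

lemma transpose_blocks_perfect_matchings_containing: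
  assumes P: "P \<in> perfect_matchings_containing S (insert {a, b} Q)"
    and ab: "a \<noteq> b" "a \<noteq> b'" and S: "b \<in> S" "b' \<in> S" and Q: "b \<notin> \<Union>Q" "b' \<notin> \<Union>Q"
  shows "transpose_blocks b b' P \<in> perfect_matchings_containing S (insert {a, b'} Q)"
proof -
  have P': "P \<in> perfect_matchings S" and "insert {a, b} Q \<subseteq> P"
    using P by (auto simp: perfect_matchings_containing_def)
  moreover have "Transposition.transpose b b' ` S = S" using S by (intro transpose_image_eq) simp
  moreover have "Transposition.transpose b b' ` q = q" if "q \<in> Q" for q
    using that Q by (intro transpose_image_fixed) auto
  moreover have "Transposition.transpose b b' ` {a, b'} = {a, b}" using ab by simp
  ultimately show ?thesis
    using transpose_blocks_perfect_matchings[OF P', of b b']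
    by (auto simp: perfect_matchings_containing_def mem_transpose_blocks)
qed

lemma bij_betw_transpose_blocks:
  assumes "a \<noteq> b" "a \<noteq> b'" "b \<in> S" "b' \<in> S" "b \<notin> \<Union>Q" "b' \<notin> \<Union>Q"
  shows "bij_betw (transpose_blocks b b')
           (perfect_matchings_containing S (insert {a, b} Q))
           (perfect_matchings_containing S (insert {a, b'} Q))"
proof (rule bij_betw_byWitness[where f' = "transpose_blocks b b'"])
  show "transpose_blocks b b' ` perfect_matchings_containing S (insert {a, b} Q)
          \<subseteq> perfect_matchings_containing S (insert {a, b'} Q)"
    using transpose_blocks_perfect_matchings_containing[OF _ assms] by blast
  show "transpose_blocks b b' ` perfect_matchings_containing S (insert {a, b'} Q)
          \<subseteq> perfect_matchings_containing S (insert {a, b} Q)"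
    using transpose_blocks_perfect_matchings_containing[OF _ assms(2,1,4,3,6,5)]
    by (auto simp: transpose_blocks_commute)
qed auto

lemma perfect_matchings_containing_covering:
  assumes S: "S \<subseteq> \<Union>Q" and P: "P \<in> perfect_matchings_containing S Q"
  shows "P = Q"
proof -
  have P': "P \<in> perfect_matchings S" and Q: "Q \<subseteq> P"
    using P by (auto simp: perfect_matchings_containing_def)
  have "e \<in> Q" if e: "e \<in> P" for e
  proof -
    obtain z where "z \<in> e" using perfect_matching_block_nonempty[OF P' e] by auto
    moreover then obtain q where "q \<in> Q" "z \<in> q"
      using S perfect_matchingsD(1)[OF P' e] by auto
    ultimately show ?thesis using perfect_matchings_unique[OF P' e, of q z] Q by auto
  qed
  with Q show ?thesis by blast
qed

text \<open>The matching is exposed by revealing the partner of one unmatched half-edge \<open>a\<close> at a time;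
  the conditional laws for two partners \<open>b\<close>, \<open>b'\<close> are coupled by the transposition of \<open>b\<close> and \<open>b'\<close>.\<close>

lemma subgaussian_avg_oriented_ratio:
  assumes S: "finite S" and ne: "perfect_matchings_containing S Q \<noteq> {}"
  shows "subgaussian (pmf_of_set (perfect_matchings_containing S Q)) (avg_oriented_ratio n)
           (real (card (S - \<Union>Q)) * (2 / real n)\<^sup>2)"
  using ne
proof (induction "card (S - \<Union>Q)" arbitrary: Q rule: less_induct)
  case less
  let ?M = "perfect_matchings_containing S Q"
  show ?case
  proof (cases "S \<subseteq> \<Union>Q")
    case True
    then have "subgaussian (pmf_of_set ?M) (avg_oriented_ratio n) 0"
      using less.prems finite_perfect_matchings_containing[OF S]
        perfect_matchings_containing_covering[OF True]
      by (intro subgaussian_const[where k = "avg_oriented_ratio n Q"]) auto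
    moreover have "card (S - \<Union>Q) = 0" using True by (metis Diff_eq_empty_iff card.empty)
    ultimately show ?thesis by (simp only: of_nat_0 mult_zero_left)
  next
    case False
    then obtain a where a: "a \<in> S" "a \<notin> \<Union>Q" by auto
    define k where "k = card (S - \<Union>Q)"
    have k: "k \<ge> 1" using a S by (auto simp: k_def Suc_le_eq card_gt_0_iff)
    have fibre: "{P \<in> ?M. block_of P a = {a, b}} = perfect_matchings_containing S (insert {a, b} Q)"
      for b using a(1) by (rule perfect_matchings_containing_fibre) simp
    have "subgaussian (pmf_of_set ?M) (avg_oriented_ratio n)
            (real (k - 1) * (2 / real n)\<^sup>2 + (2 / real n)\<^sup>2)"
    proof (rule subgaussian_pmf_of_set_fibres[where \<phi> = "\<lambda>P. block_of P a"])
      show "finite ?M" by (rule finite_perfect_matchings_containing[OF S])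
      fix v assume v: "v \<in> (\<lambda>P. block_of P a) ` ?M"
      then obtain b where b: "v = {a, b}" by (rule block_of_eq_doubleton[OF _ a])
      have "perfect_matchings_containing S (insert v Q) \<noteq> {}"
        using v unfolding b fibre[symmetric] by blast
      moreover have lt: "card (S - \<Union>(insert v Q)) < card (S - \<Union>Q)"
        using S a b by (intro psubset_card_mono) auto
      ultimately have "subgaussian (pmf_of_set (perfect_matchings_containing S (insert v Q)))
          (avg_oriented_ratio n) (real (card (S - \<Union>(insert v Q))) * (2 / real n)\<^sup>2)"
        using less.hyps by blast
      then show "subgaussian (pmf_of_set {P \<in> ?M. block_of P a = v}) (avg_oriented_ratio n)
                   (real (k - 1) * (2 / real n)\<^sup>2)"
        unfolding b fibre
        by (rule subgaussian_mono) (use lt b in \<open>intro mult_right_mono, auto simp: k_def\<close>)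
    next
      fix v v' assume "v \<in> (\<lambda>P. block_of P a) ` ?M" "v' \<in> (\<lambda>P. block_of P a) ` ?M"
      obtain b where v: "v = {a, b}" "a \<noteq> b" "b \<in> S" "b \<notin> \<Union>Q"
        using \<open>v \<in> _\<close> by (rule block_of_eq_doubleton[OF _ a])
      obtain b' where v': "v' = {a, b'}" "a \<noteq> b'" "b' \<in> S" "b' \<notin> \<Union>Q"
        using \<open>v' \<in> _\<close> by (rule block_of_eq_doubleton[OF _ a])
      have "\<bar>avg_oriented_ratio n P - avg_oriented_ratio n (transpose_blocks b b' P)\<bar> \<le> 2 / real n"
        if "P \<in> perfect_matchings_containing S (insert {a, b} Q)" for P
        using that avg_oriented_ratio_transpose_blocks[OF S]
        by (auto simp: perfect_matchings_containing_def)
      with bij_betw_transpose_blocks[OF v(2) v'(2) v(3) v'(3) v(4) v'(4)]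
      show "\<exists>\<sigma>. bij_betw \<sigma> {P \<in> ?M. block_of P a = v} {P \<in> ?M. block_of P a = v'} \<and>
              (\<forall>P\<in>{P \<in> ?M. block_of P a = v}.
                 \<bar>avg_oriented_ratio n P - avg_oriented_ratio n (\<sigma> P)\<bar> \<le> 2 / real n)"
        unfolding v(1) v'(1) fibre by blast
    qed (use less.prems in simp)
    also have "real (k - 1) * (2 / real n)\<^sup>2 + (2 / real n)\<^sup>2 = real k * (2 / real n)\<^sup>2"
      using k by (simp add: of_nat_diff algebra_simps)
    finally show ?thesis by (simp add: k_def)
  qed
qed

section \<open>The oriented configuration model\<close>

definition oriented_matching_model :: "(nat \<times> nat) set \<Rightarrow> (nat \<times> nat) multiset pmf" where
  "oriented_matching_model S = bind_pmf (pmf_of_set (perfect_matchings S))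
     (\<lambda>P. map_pmf (oriented_graph P) (pmf_of_set (orientations P)))"

definition discard_if_odd :: "'a set \<Rightarrow> 'a set pmf" where
  "discard_if_odd H =
     (if even (card H) then return_pmf H else map_pmf (\<lambda>h. H - {h}) (pmf_of_set H))"

lemma oriented_config_model_eq_bind:
  "oriented_config_model n d = bind_pmf (discard_if_odd (half_edges n d)) oriented_matching_model"
  by (simp add: oriented_config_model_def oriented_matching_model_def[abs_def]
      oriented_graph_def[abs_def] discard_if_odd_def Let_def)

lemma finite_set_pmf_oriented_graph:
  assumes "finite S" "P \<in> perfect_matchings S"
  shows "finite (set_pmf (map_pmf (oriented_graph P) (pmf_of_set (orientations P))))"
  using finite_orientations[OF finite_perfect_matching[OF assms] finite_perfect_matching_block[OF assms(2)]]
    orientations_nonempty[OF perfect_matching_block_nonempty[OF assms(2)]]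
  by simp

lemma expectation_oriented_matching_model:
  assumes S: "finite S" "even (card S)"
  shows "measure_pmf.expectation (oriented_matching_model S) (dmatching_ratio n)
           = measure_pmf.expectation (pmf_of_set (perfect_matchings S)) (avg_oriented_ratio n)"
proof -
  have fin: "finite (perfect_matchings S)" "perfect_matchings S \<noteq> {}"
    using S finite_perfect_matchings perfect_matchings_nonempty by auto
  show ?thesis
    unfolding oriented_matching_model_def avg_oriented_ratio_def
    using fin finite_set_pmf_oriented_graph[OF S(1)]
    by (subst pmf_expectation_bind[of "perfect_matchings S"])
       (auto simp: expectation_finite_pmf integral_map_pmf)
qed

lemma subgaussian_oriented_matching_model:
  assumes S: "finite S" "even (card S)"
  shows "subgaussian (oriented_matching_model S) (dmatching_ratio n) (5 * real (card S) / (real n)\<^sup>2)"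
proof -
  have fin: "finite (perfect_matchings S)" "perfect_matchings S \<noteq> {}"
    using S finite_perfect_matchings perfect_matchings_nonempty by auto
  have "subgaussian (oriented_matching_model S) (dmatching_ratio n)
          (real (card S) * (1 / real n)\<^sup>2 + real (card S) * (2 / real n)\<^sup>2)"
    unfolding oriented_matching_model_def
  proof (rule subgaussian_bind_pmf)
    show "finite (set_pmf (pmf_of_set (perfect_matchings S)))" using fin by simp
    fix P assume "P \<in> set_pmf (pmf_of_set (perfect_matchings S))"
    then have P: "P \<in> perfect_matchings S" using fin by simp
    have "orientations_agreeing P {} undefined = orientations P"
      by (simp add: orientations_agreeing_def)
    with subgaussian_oriented_graph[OF finite_perfect_matching[OF S(1) P]
        finite_perfect_matching_block[OF P], of "{}" undefined n]
      orientations_nonempty[OF perfect_matching_block_nonempty[OF P]]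
    have "subgaussian (pmf_of_set (orientations P)) (dmatching_ratio n \<circ> oriented_graph P)
            (real (card P) * (1 / real n)\<^sup>2)"
      by (simp add: o_def)
    then have "subgaussian (pmf_of_set (orientations P)) (dmatching_ratio n \<circ> oriented_graph P)
            (real (card S) * (1 / real n)\<^sup>2)"
      by (rule subgaussian_mono)
         (use card_perfect_matching_le[OF S(1) P] in \<open>intro mult_right_mono, auto\<close>)
    then show "subgaussian (map_pmf (oriented_graph P) (pmf_of_set (orientations P)))
                 (dmatching_ratio n) (real (card S) * (1 / real n)\<^sup>2)"
      by (rule subgaussian_map_pmf)
  next
    have "perfect_matchings_containing S {} = perfect_matchings S"
      by (simp add: perfect_matchings_containing_def)
    moreover have "(\<lambda>P. measure_pmf.expectation (map_pmf (oriented_graph P) (pmf_of_set (orientations P)))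
              (dmatching_ratio n)) = avg_oriented_ratio n"
      by (simp add: fun_eq_iff avg_oriented_ratio_def integral_map_pmf)
    ultimately show "subgaussian (pmf_of_set (perfect_matchings S))
       (\<lambda>P. measure_pmf.expectation (map_pmf (oriented_graph P) (pmf_of_set (orientations P)))
              (dmatching_ratio n))
       (real (card S) * (2 / real n)\<^sup>2)"
      using subgaussian_avg_oriented_ratio[OF S(1), of "{}" n] fin by simp
  qed
  then show ?thesis by (simp add: power_divide add_divide_distrib[symmetric])
qed

lemma set_pmf_discard_if_odd:
  assumes H: "finite H" and S: "S \<in> set_pmf (discard_if_odd H)"
  shows "finite S" "even (card S)" "card S \<le> card H"
proof (atomize (full), cases "even (card H)")
  case True
  then show "finite S \<and> even (card S) \<and> card S \<le> card H" using S H by (simp add: discard_if_odd_def)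
next
  case False
  then have "H \<noteq> {}" by auto
  then obtain h where "h \<in> H" "S = H - {h}" using S H False by (auto simp: discard_if_odd_def)
  then show "finite S \<and> even (card S) \<and> card S \<le> card H"
    using False H by (auto simp: card_Diff_singleton card_gt_0_iff)
qed

lemma finite_set_pmf_discard_if_odd: "finite H \<Longrightarrow> finite (set_pmf (discard_if_odd H))"
  by (cases "H = {}") (auto simp: discard_if_odd_def)

lemma transpose_Diff_singleton:
  assumes "h \<in> H" "h' \<in> H"
  shows "Transposition.transpose h h' ` (H - {h}) = H - {h'}"
proof (rule set_eqI)
  fix z
  have "z \<in> Transposition.transpose h h' ` (H - {h}) \<longleftrightarrow> Transposition.transpose h h' z \<in> H - {h}"
    by (rule in_transpose_image_iff)
  also have "\<dots> \<longleftrightarrow> z \<in> H - {h'}"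
    using assms by (cases "z = h"; cases "z = h'") auto
  finally show "z \<in> Transposition.transpose h h' ` (H - {h}) \<longleftrightarrow> z \<in> H - {h'}" .
qed

text \<open>The discarded half-edge is coupled by a transposition as well.\<close>

lemma expectation_avg_oriented_ratio_discard_diff:
  assumes H: "finite H" "odd (card H)" and h: "h \<in> H" "h' \<in> H"
  shows "\<bar>measure_pmf.expectation (pmf_of_set (perfect_matchings (H - {h}))) (avg_oriented_ratio n)
          - measure_pmf.expectation (pmf_of_set (perfect_matchings (H - {h'}))) (avg_oriented_ratio n)\<bar>
         \<le> 2 / real n"
proof (rule expectation_pmf_of_set_bij_diff)
  show "finite (perfect_matchings (H - {h}))" using H by (simp add: finite_perfect_matchings)
  show "perfect_matchings (H - {h}) \<noteq> {}"
    using H h by (intro perfect_matchings_nonempty) (auto simp: card_Diff_singleton)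
  have images: "Transposition.transpose h h' ` (H - {h}) = H - {h'}"
    "Transposition.transpose h h' ` (H - {h'}) = H - {h}"
    using transpose_Diff_singleton[OF h] transpose_Diff_singleton[OF h(2,1)]
    by (simp_all add: transpose_commute)
  show "bij_betw (transpose_blocks h h') (perfect_matchings (H - {h})) (perfect_matchings (H - {h'}))"
  proof (rule bij_betw_byWitness[where f' = "transpose_blocks h h'"])
    show "transpose_blocks h h' ` perfect_matchings (H - {h}) \<subseteq> perfect_matchings (H - {h'})"
      using transpose_blocks_perfect_matchings[of _ "H - {h}" h h'] images by auto
    show "transpose_blocks h h' ` perfect_matchings (H - {h'}) \<subseteq> perfect_matchings (H - {h})"
      using transpose_blocks_perfect_matchings[of _ "H - {h'}" h h'] images by auto
  qed auto
  show "\<bar>avg_oriented_ratio n P - avg_oriented_ratio n (transpose_blocks h h' P)\<bar> \<le> 2 / real n"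
    if "P \<in> perfect_matchings (H - {h})" for P
    using avg_oriented_ratio_transpose_blocks[OF _ that] H by simp
qed

lemma subgaussian_discard_if_odd:
  assumes H: "finite H"
  shows "subgaussian (discard_if_odd H)
           (\<lambda>S. measure_pmf.expectation (oriented_matching_model S) (dmatching_ratio n))
           (4 * real (card H) / (real n)\<^sup>2)"
proof (cases "even (card H)")
  case True
  then have "subgaussian (discard_if_odd H)
               (\<lambda>S. measure_pmf.expectation (oriented_matching_model S) (dmatching_ratio n)) 0"
    by (intro subgaussian_const) (auto simp: discard_if_odd_def)
  then show ?thesis by (rule subgaussian_mono) simp
next
  case False
  then have "H \<noteq> {}" by auto
  have sg: "subgaussian (discard_if_odd H)
          (\<lambda>S. measure_pmf.expectation (oriented_matching_model S) (dmatching_ratio n)) ((2 / real n)\<^sup>2)"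
  proof (rule subgaussian_range[OF finite_set_pmf_discard_if_odd[OF H]])
    fix S S' assume S: "S \<in> set_pmf (discard_if_odd H)" and S': "S' \<in> set_pmf (discard_if_odd H)"
    obtain h h' where "h \<in> H" "S = H - {h}" "h' \<in> H" "S' = H - {h'}"
      using S S' H False \<open>H \<noteq> {}\<close> by (auto simp: discard_if_odd_def)
    with expectation_avg_oriented_ratio_discard_diff[OF H False, of h h' n]
      expectation_oriented_matching_model[OF set_pmf_discard_if_odd(1,2)[OF H S], of n]
      expectation_oriented_matching_model[OF set_pmf_discard_if_odd(1,2)[OF H S'], of n]
    show "measure_pmf.expectation (oriented_matching_model S) (dmatching_ratio n)
            - measure_pmf.expectation (oriented_matching_model S') (dmatching_ratio n) \<le> 2 / real n"
      by simp
  qed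
  have "real (card H) \<ge> 1" using False by (simp add: Suc_le_eq odd_pos)
  then show ?thesis
    by (intro subgaussian_mono[OF sg]) (simp add: power_divide divide_right_mono)
qed

lemma subgaussian_oriented_config_model:
  "subgaussian (oriented_config_model n d) (dmatching_ratio n) (9 * real (\<Sum>k<n. d k) / (real n)\<^sup>2)"
proof -
  define H where "H = half_edges n d"
  have H: "finite H" by (simp add: H_def finite_half_edges)
  have "subgaussian (bind_pmf (discard_if_odd H) oriented_matching_model) (dmatching_ratio n)
          (5 * real (card H) / (real n)\<^sup>2 + 4 * real (card H) / (real n)\<^sup>2)"
  proof (rule subgaussian_bind_pmf[OF finite_set_pmf_discard_if_odd[OF H] _ subgaussian_discard_if_odd[OF H]])
    fix S assume S: "S \<in> set_pmf (discard_if_odd H)"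
    show "subgaussian (oriented_matching_model S) (dmatching_ratio n) (5 * real (card H) / (real n)\<^sup>2)"
      by (rule subgaussian_mono[OF subgaussian_oriented_matching_model[OF set_pmf_discard_if_odd(1,2)[OF H S]]])
         (use set_pmf_discard_if_odd(3)[OF H S] in \<open>simp add: divide_right_mono\<close>)
  qed
  then show ?thesis
    by (simp add: oriented_config_model_eq_bind H_def card_half_edges add_divide_distrib[symmetric])
qed

lemma sum_le_sum_squares: "real (\<Sum>k<n. d k) \<le> (\<Sum>k<n. real (d k) ^ 2)"
  unfolding of_nat_sum by (intro sum_mono) (simp add: power2_eq_square le_square
      flip: of_nat_mult)

theorem theorem1p1:
  fixes n :: nat and din dout :: "nat \<Rightarrow> nat" and \<epsilon> :: real
  assumes "n \<ge> 1" and "\<epsilon> > 0"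
  shows "((\<Sum>k<n. dout k) = (\<Sum>k<n. din k) \<longrightarrow>
           measure_pmf.prob (directed_config_model n din dout)
             {G. \<bar>dmatching_ratio n G -
                  measure_pmf.expectation (directed_config_model n din dout) (dmatching_ratio n)\<bar> > \<epsilon>}
           \<le> 2 * exp (- (\<epsilon>^2 * real n ^ 2) / (8 * (\<Sum>k<n. real (din k + dout k) ^ 2))))
       \<and>
         measure_pmf.prob (oriented_config_model n (\<lambda>k. din k + dout k))
             {G. \<bar>dmatching_ratio n G -
                  measure_pmf.expectation (oriented_config_model n (\<lambda>k. din k + dout k)) (dmatching_ratio n)\<bar> > \<epsilon>}
           \<le> 2 * exp (- (\<epsilon>^2 * real n ^ 2) / (32 * (\<Sum>k<n. real (din k + dout k) ^ 2)))"
proof -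
  define S where "S = (\<Sum>k<n. real (din k + dout k) ^ 2)"
  have n: "n > 0" and S: "S \<ge> 0" using assms(1) by (auto simp: S_def intro: sum_nonneg)
  have total: "real (\<Sum>k<n. din k + dout k) \<le> S"
    unfolding S_def by (rule sum_le_sum_squares)
  moreover have "(\<Sum>k<n. dout k) \<le> (\<Sum>k<n. din k + dout k)" by (intro sum_mono) simp
  ultimately have out: "real (\<Sum>k<n. dout k) \<le> S" by linarith
  have "measure_pmf.prob (directed_config_model n din dout)
          {G. \<bar>dmatching_ratio n G -
               measure_pmf.expectation (directed_config_model n din dout) (dmatching_ratio n)\<bar> > \<epsilon>}
          \<le> 2 * exp (- (\<epsilon>^2 * real n ^ 2) / (8 * S))"
    if "(\<Sum>k<n. dout k) = (\<Sum>k<n. din k)"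
    by (rule subgaussian_tail_scaled[OF subgaussian_directed_config_model[OF that] _ _ S n assms(2)])
       (use out S in linarith)+
  moreover have "measure_pmf.prob (oriented_config_model n (\<lambda>k. din k + dout k))
          {G. \<bar>dmatching_ratio n G - measure_pmf.expectation
                 (oriented_config_model n (\<lambda>k. din k + dout k)) (dmatching_ratio n)\<bar> > \<epsilon>}
          \<le> 2 * exp (- (\<epsilon>^2 * real n ^ 2) / (32 * S))"
    by (rule subgaussian_tail_scaled[OF subgaussian_oriented_config_model _ _ S n assms(2)])
       (use total S in linarith)+
  ultimately show ?thesis unfolding S_def by blast
qed

end
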